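(* Let $S^0$ be an adequate semigroup with semilattice of idempotents $E^0$, let $I$ be a left regular band having $E^0$ as a semilattice transversal, and suppose there is a left action $(x,e)\mapsto x\ast e$ of $S^0$ on $I$ (so $(xy)\ast e=x\ast(y\ast e)$) with $x\ast(ef)=(x\ast e)(x\ast f)$ for all $x\in S^0$, $e,f\in I$. Let $W=\{(e,x)\in I\times S^0: e\in L_{x^+}\}$ with multiplication $(e,x)(g,y)=(e(x\ast g),xy)$, and suppose that $x\ast y^+=(xy)^+$ for all $x,y\in S^0$. Then $W$ is a left abundant semigroup and for every $w\in W$ the $\mathcal{R}^\ast$-class of $w$ in $W$ contains exactly one idempotent.
   Context: For a semigroup $T$, $T^1$ is $T$ with an identity adjoined; $a\,\mathcal{R}^\ast\,b$ iff for all $x,y\in T^1$, $xa=ya\Leftrightarrow xb=yb$; $\mathcal{L}^\ast$ is defined dually. $T$ is left abundant if each $\mathcal{R}^\ast$-class contains an idempotent, abundant if also each $\mathcal{L}^\ast$-class does, and adequate if abundant with commuting idempotents; in an adequate semigroup $x^+$ is the unique idempotent $\mathcal{R}^\ast$-related to $x$. A left regular band satisfies $xyx=xy$; $E^0$ is a semilattice transversal of $I$ if $E^0$ is a subsemilattice of $I$ and each element of $I$ has exactly one inverse in $E^0$. For $x\in E^0$, $L_x$ is the $\mathcal{L}$-class of $x$ in $I$. *)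

theory Defs
  imports Main
begin

text \<open>Semigroups are given by a carrier set T and a binary operation m.
  The monoid T^1 is modelled by option: None is the adjoined identity.\<close>

definition semigroup_on :: "'a set \<Rightarrow> ('a \<Rightarrow> 'a \<Rightarrow> 'a) \<Rightarrow> bool" where
  "semigroup_on T m \<longleftrightarrow> (\<forall>a\<in>T. \<forall>b\<in>T. m a b \<in> T) \<and>
     (\<forall>a\<in>T. \<forall>b\<in>T. \<forall>c\<in>T. m (m a b) c = m a (m b c))"

definition one_adj :: "'a set \<Rightarrow> 'a option set" where
  "one_adj T = insert None (Some ` T)"

fun lmul1 :: "('a \<Rightarrow> 'a \<Rightarrow> 'a) \<Rightarrow> 'a option \<Rightarrow> 'a \<Rightarrow> 'a" where
  "lmul1 m None a = a"
| "lmul1 m (Some x) a = m x a"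

fun rmul1 :: "('a \<Rightarrow> 'a \<Rightarrow> 'a) \<Rightarrow> 'a \<Rightarrow> 'a option \<Rightarrow> 'a" where
  "rmul1 m a None = a"
| "rmul1 m a (Some x) = m a x"

definition idem :: "'a set \<Rightarrow> ('a \<Rightarrow> 'a \<Rightarrow> 'a) \<Rightarrow> 'a \<Rightarrow> bool" where
  "idem T m e \<longleftrightarrow> e \<in> T \<and> m e e = e"

definition Rstar :: "'a set \<Rightarrow> ('a \<Rightarrow> 'a \<Rightarrow> 'a) \<Rightarrow> 'a \<Rightarrow> 'a \<Rightarrow> bool" where
  "Rstar T m a b \<longleftrightarrow> a \<in> T \<and> b \<in> T \<and>
     (\<forall>x\<in>one_adj T. \<forall>y\<in>one_adj T. lmul1 m x a = lmul1 m y a \<longleftrightarrow> lmul1 m x b = lmul1 m y b)"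

definition Lstar :: "'a set \<Rightarrow> ('a \<Rightarrow> 'a \<Rightarrow> 'a) \<Rightarrow> 'a \<Rightarrow> 'a \<Rightarrow> bool" where
  "Lstar T m a b \<longleftrightarrow> a \<in> T \<and> b \<in> T \<and>
     (\<forall>x\<in>one_adj T. \<forall>y\<in>one_adj T. rmul1 m a x = rmul1 m a y \<longleftrightarrow> rmul1 m b x = rmul1 m b y)"

definition left_abundant :: "'a set \<Rightarrow> ('a \<Rightarrow> 'a \<Rightarrow> 'a) \<Rightarrow> bool" where
  "left_abundant T m \<longleftrightarrow> semigroup_on T m \<and> (\<forall>a\<in>T. \<exists>e. idem T m e \<and> Rstar T m a e)"

definition abundant :: "'a set \<Rightarrow> ('a \<Rightarrow> 'a \<Rightarrow> 'a) \<Rightarrow> bool" where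
  "abundant T m \<longleftrightarrow> left_abundant T m \<and> (\<forall>a\<in>T. \<exists>e. idem T m e \<and> Lstar T m a e)"

definition adequate :: "'a set \<Rightarrow> ('a \<Rightarrow> 'a \<Rightarrow> 'a) \<Rightarrow> bool" where
  "adequate T m \<longleftrightarrow> abundant T m \<and>
     (\<forall>e f. idem T m e \<and> idem T m f \<longrightarrow> m e f = m f e)"

definition plus :: "'a set \<Rightarrow> ('a \<Rightarrow> 'a \<Rightarrow> 'a) \<Rightarrow> 'a \<Rightarrow> 'a" where
  "plus T m x = (THE e. idem T m e \<and> Rstar T m x e)"

definition left_regular_band :: "'a set \<Rightarrow> ('a \<Rightarrow> 'a \<Rightarrow> 'a) \<Rightarrow> bool" where
  "left_regular_band T m \<longleftrightarrow> semigroup_on T m \<and> (\<forall>a\<in>T. m a a = a) \<and>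
     (\<forall>x\<in>T. \<forall>y\<in>T. m (m x y) x = m x y)"

definition inverse_of :: "('a \<Rightarrow> 'a \<Rightarrow> 'a) \<Rightarrow> 'a \<Rightarrow> 'a \<Rightarrow> bool" where
  "inverse_of m a b \<longleftrightarrow> m (m a b) a = a \<and> m (m b a) b = b"

definition semilattice_transversal :: "'a set \<Rightarrow> 'a set \<Rightarrow> ('a \<Rightarrow> 'a \<Rightarrow> 'a) \<Rightarrow> bool" where
  "semilattice_transversal E I m \<longleftrightarrow> E \<subseteq> I \<and>
     (\<forall>e\<in>E. \<forall>f\<in>E. m e f \<in> E \<and> m e f = m f e) \<and> (\<forall>e\<in>E. m e e = e) \<and>
     (\<forall>a\<in>I. \<exists>!b. b \<in> E \<and> inverse_of m a b)"

definition Lrel :: "'a set \<Rightarrow> ('a \<Rightarrow> 'a \<Rightarrow> 'a) \<Rightarrow> 'a \<Rightarrow> 'a \<Rightarrow> bool" where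
  "Lrel T m a b \<longleftrightarrow> a \<in> T \<and> b \<in> T \<and>
     (\<exists>u\<in>one_adj T. lmul1 m u b = a) \<and> (\<exists>v\<in>one_adj T. lmul1 m v a = b)"

definition Wset :: "'a set \<Rightarrow> ('a \<Rightarrow> 'a \<Rightarrow> 'a) \<Rightarrow> 'a set \<Rightarrow> ('a \<Rightarrow> 'a \<Rightarrow> 'a) \<Rightarrow> ('a \<times> 'a) set" where
  "Wset S mS I mI = {(e, x). e \<in> I \<and> x \<in> S \<and> Lrel I mI e (plus S mS x)}"

definition Wmul :: "('a \<Rightarrow> 'a \<Rightarrow> 'a) \<Rightarrow> ('a \<Rightarrow> 'a \<Rightarrow> 'a) \<Rightarrow> ('a \<Rightarrow> 'a \<Rightarrow> 'a)
     \<Rightarrow> 'a \<times> 'a \<Rightarrow> 'a \<times> 'a \<Rightarrow> 'a \<times> 'a" where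
  "Wmul mS mI act p q = (mI (fst p) (act (snd p) (fst q)), mS (snd p) (snd q))"

end

theory Submission
  imports Defs
begin

text \<open>Every (e, x) in W is R*-related to the idempotent (e, x+): left multiplication in W acts
  on second components as in S, where x and x+ are R*-related. Conversely, an idempotent (g, y)
  R*-related to (e, x+) absorbs it on both sides; the second components give y = x+ because
  idempotents of S commute, and the first ones give e = g (x+ * e) = g, since x+ * e lies in the
  L-class of x+ in the band I, and h h' = h for any two elements h, h' of an L-class of a band.\<close>

lemma Rstar_iff:
  "Rstar T m a b \<longleftrightarrow> a \<in> T \<and> b \<in> T \<and>
     (\<forall>z\<in>T. \<forall>z'\<in>T. m z a = m z' a \<longleftrightarrow> m z b = m z' b) \<and>
     (\<forall>z\<in>T. m z a = a \<longleftrightarrow> m z b = b)"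
  unfolding Rstar_def one_adj_def by (auto simp: eq_commute)

lemma Rstar_refl: "a \<in> T \<Longrightarrow> Rstar T m a a"
  by (simp add: Rstar_iff)

lemma Rstar_sym: "Rstar T m a b \<Longrightarrow> Rstar T m b a"
  unfolding Rstar_def by blast

lemma Rstar_trans: "Rstar T m a b \<Longrightarrow> Rstar T m b c \<Longrightarrow> Rstar T m a c"
  unfolding Rstar_def by blast

lemma Rstar_idem_absorb:
  assumes "Rstar T m e f" "idem T m e" "idem T m f"
  shows "m f e = e"
  using assms by (simp add: Rstar_iff idem_def)

lemma adequate_semigroup: "adequate S m \<Longrightarrow> semigroup_on S m"
  by (simp add: adequate_def abundant_def left_abundant_def)

lemma adequate_idem_commute: "adequate S m \<Longrightarrow> idem S m e \<Longrightarrow> idem S m f \<Longrightarrow> m e f = m f e"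
  by (simp add: adequate_def)

lemma adequate_Rstar_idem_unique:
  assumes S: "adequate S m"
    and "Rstar S m x e" "Rstar S m x f" "idem S m e" "idem S m f"
  shows "e = f"
proof -
  have ef: "Rstar S m e f" using Rstar_trans[OF Rstar_sym[OF assms(2)] assms(3)] .
  have "m f e = e" using Rstar_idem_absorb[OF ef assms(4,5)] .
  moreover have "m e f = f" using Rstar_idem_absorb[OF Rstar_sym[OF ef] assms(5,4)] .
  ultimately show ?thesis using adequate_idem_commute[OF S assms(4,5)] by simp
qed

lemma
  assumes "adequate S m" "x \<in> S"
  shows idem_plus: "idem S m (plus S m x)"
    and Rstar_plus: "Rstar S m x (plus S m x)"
proof -
  obtain e where e: "idem S m e" "Rstar S m x e"
    using assms by (auto simp: adequate_def abundant_def left_abundant_def)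
  have unique: "y = e" if "idem S m y" "Rstar S m x y" for y
    using adequate_Rstar_idem_unique[OF assms(1) that(2) e(2) that(1) e(1)] .
  have "idem S m (plus S m x) \<and> Rstar S m x (plus S m x)"
    unfolding plus_def by (rule theI[of _ e]) (use e in simp, elim conjE, erule (1) unique)
  then show "idem S m (plus S m x)" "Rstar S m x (plus S m x)" by auto
qed

lemma plus_closed: "adequate S m \<Longrightarrow> x \<in> S \<Longrightarrow> plus S m x \<in> S"
  using idem_plus by (metis idem_def)

lemma plus_of_idem: "adequate S m \<Longrightarrow> idem S m e \<Longrightarrow> plus S m e = e"
  by (metis Rstar_plus Rstar_refl adequate_Rstar_idem_unique idem_def idem_plus)

lemma plus_fix_iff:
  assumes "adequate S m" "x \<in> S" "z \<in> S"
  shows "m z x = x \<longleftrightarrow> m z (plus S m x) = plus S m x"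
  using Rstar_plus[OF assms(1,2)] assms(3) by (simp add: Rstar_iff)

lemma plus_cancel_iff:
  assumes "adequate S m" "x \<in> S" "z \<in> S" "z' \<in> S"
  shows "m z x = m z' x \<longleftrightarrow> m z (plus S m x) = m z' (plus S m x)"
  using Rstar_plus[OF assms(1,2)] assms(3,4) by (simp add: Rstar_iff)

lemma plus_mult_left:
  assumes "adequate S m" "x \<in> S"
  shows "m (plus S m x) x = x"
  using plus_fix_iff[OF assms plus_closed[OF assms]] idem_plus[OF assms] by (simp add: idem_def)

lemma plus_mult_plus:
  assumes S: "adequate S m" and x: "x \<in> S" and y: "y \<in> S"
  shows "m (plus S m x) (plus S m (m x y)) = plus S m (m x y)"
proof -
  have "\<forall>a\<in>S. \<forall>b\<in>S. m a b \<in> S" and assoc: "\<forall>a\<in>S. \<forall>b\<in>S. \<forall>c\<in>S. m (m a b) c = m a (m b c)"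
    using adequate_semigroup[OF S] by (simp_all add: semigroup_on_def)
  then have xy: "m x y \<in> S" using x y by blast
  have "m (plus S m x) (m x y) = m (m (plus S m x) x) y"
    using assoc plus_closed[OF S x] x y by simp
  also have "\<dots> = m x y" using plus_mult_left[OF S x] by simp
  finally show ?thesis using plus_fix_iff[OF S xy plus_closed[OF S x]] by simp
qed

lemma Lrel_band_iff:
  assumes "semigroup_on T m" "\<forall>a\<in>T. m a a = a"
  shows "Lrel T m a b \<longleftrightarrow> a \<in> T \<and> b \<in> T \<and> m a b = a \<and> m b a = b"
proof
  assume L: "Lrel T m a b"
  have absorb: "m c d = c" if "lmul1 m u d = c" "u \<in> one_adj T" "c \<in> T" "d \<in> T" for u c d
    using that assms by (cases u) (auto simp: one_adj_def semigroup_on_def)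
  from L show "a \<in> T \<and> b \<in> T \<and> m a b = a \<and> m b a = b"
    unfolding Lrel_def by (metis absorb)
next
  assume "a \<in> T \<and> b \<in> T \<and> m a b = a \<and> m b a = b"
  then show "Lrel T m a b"
    unfolding Lrel_def one_adj_def by (metis imageI insertCI lmul1.simps(2))
qed

lemma Lrel_sym: "Lrel T m a b \<Longrightarrow> Lrel T m b a"
  unfolding Lrel_def by blast

lemma Lrel_band_trans:
  assumes band: "semigroup_on T m" "\<forall>a\<in>T. m a a = a"
    and "Lrel T m a b" "Lrel T m b c"
  shows "Lrel T m a c"
proof -
  have T: "a \<in> T" "b \<in> T" "c \<in> T" and ab: "m a b = a" "m b a = b" and bc: "m b c = b" "m c b = c"
    using assms by (simp_all add: Lrel_band_iff[OF band])
  have assoc: "m (m u v) w = m u (m v w)" if "u \<in> T" "v \<in> T" "w \<in> T" for u v w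
    using band(1) that by (simp add: semigroup_on_def)
  have "m a c = a" using assoc[of a b c] T ab bc by simp
  moreover have "m c a = c" using assoc[of c b a] T ab bc by simp
  ultimately show ?thesis using T by (simp add: Lrel_band_iff[OF band])
qed

locale adequate_band_action =
  fixes S I :: "'a set"
    and mS mI act :: "'a \<Rightarrow> 'a \<Rightarrow> 'a"
  assumes S_adequate: "adequate S mS"
    and I_semigroup: "semigroup_on I mI"
    and I_idem: "\<forall>a\<in>I. mI a a = a"
    and idem_in_I: "idem S mS e \<Longrightarrow> e \<in> I"
    and idem_mult_agree: "idem S mS e \<Longrightarrow> idem S mS f \<Longrightarrow> mI e f = mS e f"
    and act_closed: "x \<in> S \<Longrightarrow> a \<in> I \<Longrightarrow> act x a \<in> I"
    and act_mult: "x \<in> S \<Longrightarrow> y \<in> S \<Longrightarrow> a \<in> I \<Longrightarrow> act (mS x y) a = act x (act y a)"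
    and act_hom: "x \<in> S \<Longrightarrow> a \<in> I \<Longrightarrow> b \<in> I \<Longrightarrow> act x (mI a b) = mI (act x a) (act x b)"
    and act_plus: "x \<in> S \<Longrightarrow> y \<in> S \<Longrightarrow> act x (plus S mS y) = plus S mS (mS x y)"
begin

abbreviation p :: "'a \<Rightarrow> 'a" where "p \<equiv> plus S mS"
abbreviation W :: "('a \<times> 'a) set" where "W \<equiv> Wset S mS I mI"
abbreviation mW :: "'a \<times> 'a \<Rightarrow> 'a \<times> 'a \<Rightarrow> 'a \<times> 'a" where "mW \<equiv> Wmul mS mI act"

lemma S_mult_closed: "x \<in> S \<Longrightarrow> y \<in> S \<Longrightarrow> mS x y \<in> S"
  using adequate_semigroup[OF S_adequate] by (simp add: semigroup_on_def)

lemma S_assoc: "x \<in> S \<Longrightarrow> y \<in> S \<Longrightarrow> z \<in> S \<Longrightarrow> mS (mS x y) z = mS x (mS y z)"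
  using adequate_semigroup[OF S_adequate] by (simp add: semigroup_on_def)

lemma I_mult_closed: "a \<in> I \<Longrightarrow> b \<in> I \<Longrightarrow> mI a b \<in> I"
  using I_semigroup by (simp add: semigroup_on_def)

lemma I_assoc: "a \<in> I \<Longrightarrow> b \<in> I \<Longrightarrow> c \<in> I \<Longrightarrow> mI (mI a b) c = mI a (mI b c)"
  using I_semigroup by (simp add: semigroup_on_def)

lemma Lrel_iff: "Lrel I mI a b \<longleftrightarrow> a \<in> I \<and> b \<in> I \<and> mI a b = a \<and> mI b a = b"
  using Lrel_band_iff[OF I_semigroup I_idem] .

lemma Lrel_trans: "Lrel I mI a b \<Longrightarrow> Lrel I mI b c \<Longrightarrow> Lrel I mI a c"
  using Lrel_band_trans[OF I_semigroup I_idem] .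

lemma act_preserves_Lrel: "x \<in> S \<Longrightarrow> Lrel I mI a b \<Longrightarrow> Lrel I mI (act x a) (act x b)"
  by (simp add: Lrel_iff act_closed flip: act_hom)

lemma act_idem_self: "idem S mS f \<Longrightarrow> act f f = f"
  using act_plus[of f f] plus_of_idem[OF S_adequate] by (simp add: idem_def)

lemma absorb_act_in_Lclass:
  assumes f: "idem S mS f" and "Lrel I mI e f" "Lrel I mI g f"
  shows "mI g (act f e) = g"
proof -
  have "Lrel I mI (act f e) f"
    using act_preserves_Lrel[of f e f] act_idem_self f assms(2) by (simp add: idem_def)
  then have "Lrel I mI (act f e) g"
    using Lrel_trans Lrel_sym[OF assms(3)] by blast
  then show ?thesis by (simp add: Lrel_iff)
qed

lemma W_mem_iff: "(e, x) \<in> W \<longleftrightarrow> x \<in> S \<and> Lrel I mI e (p x)"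
  by (auto simp: Wset_def Lrel_def)

lemma Wmul_Pair: "mW (e, x) (g, y) = (mI e (act x g), mS x y)"
  by (simp add: Wmul_def)

lemma W_mult_closed:
  assumes "(e, x) \<in> W" "(g, y) \<in> W"
  shows "mW (e, x) (g, y) \<in> W"
proof -
  have x: "x \<in> S" "Lrel I mI e (p x)" and y: "y \<in> S" "Lrel I mI g (p y)"
    using assms by (auto simp: W_mem_iff)
  define h where "h = act x g"
  define k where "k = p (mS x y)"
  have hk: "Lrel I mI h k"
    using act_preserves_Lrel[OF x(1) y(2)] act_plus x y by (simp add: h_def k_def)
  have idems: "idem S mS k" "idem S mS (p x)"
    using idem_plus[OF S_adequate] x y S_mult_closed by (auto simp: k_def)
  have k_px: "mI k (p x) = k"
    using idem_mult_agree[OF idems] adequate_idem_commute[OF S_adequate idems]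
      plus_mult_plus[OF S_adequate x(1) y(1)] by (simp add: k_def)
  have I: "e \<in> I" "p x \<in> I" "k \<in> I" using x(2) hk by (simp_all add: Lrel_iff)
  have "mI k e = mI k (mI (p x) e)" using I k_px by (simp flip: I_assoc)
  also have "\<dots> = k" using x(2) k_px by (simp add: Lrel_iff)
  finally have "mI k e = k" .
  moreover have "mI (mI e h) k = mI e h"
    using x(2) hk by (simp add: Lrel_iff I_assoc)
  ultimately have "Lrel I mI (mI e h) k"
    using x(2) hk by (simp add: Lrel_iff I_mult_closed flip: I_assoc)
  then show ?thesis
    using x y S_mult_closed by (simp add: W_mem_iff Wmul_Pair h_def k_def)
qed

lemma W_assoc:
  assumes "(e, x) \<in> W" "(g, y) \<in> W" "(f, z) \<in> W"
  shows "mW (mW (e, x) (g, y)) (f, z) = mW (e, x) (mW (g, y) (f, z))"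
proof -
  have "e \<in> I" "x \<in> S" "g \<in> I" "y \<in> S" "f \<in> I" "z \<in> S"
    using assms by (auto simp: W_mem_iff Lrel_iff)
  then show ?thesis
    by (simp add: Wmul_Pair S_assoc I_assoc act_closed act_mult act_hom I_mult_closed)
qed

lemma W_semigroup: "semigroup_on W mW"
  unfolding semigroup_on_def using W_mult_closed W_assoc by fast

lemma W_idem_plus:
  assumes "(e, x) \<in> W"
  shows "idem W mW (e, p x)"
proof -
  have x: "x \<in> S" "Lrel I mI e (p x)" using assms by (auto simp: W_mem_iff)
  have px: "idem S mS (p x)" using idem_plus[OF S_adequate x(1)] .
  then have "(e, p x) \<in> W"
    using x plus_of_idem[OF S_adequate] by (simp add: W_mem_iff idem_def)
  then show ?thesis
    using absorb_act_in_Lclass[OF px x(2) x(2)] px by (simp add: idem_def Wmul_Pair)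
qed

lemma W_Rstar_plus:
  assumes w: "(e, x) \<in> W"
  shows "Rstar W mW (e, x) (e, p x)"
proof -
  have x: "x \<in> S" using w by (simp add: W_mem_iff)
  have left_fix: "mW u (e, x) = (e, x) \<longleftrightarrow> mW u (e, p x) = (e, p x)" if u: "u \<in> W" for u
  proof -
    obtain f z where "u = (f, z)" "z \<in> S" using u by (cases u) (simp add: W_mem_iff)
    then show ?thesis using plus_fix_iff[OF S_adequate x] by (simp add: Wmul_Pair)
  qed
  have left_cancel: "mW u (e, x) = mW u' (e, x) \<longleftrightarrow> mW u (e, p x) = mW u' (e, p x)"
    if u: "u \<in> W" "u' \<in> W" for u u'
  proof -
    obtain f z f' z' where "u = (f, z)" "u' = (f', z')" "z \<in> S" "z' \<in> S"
      using u by (cases u, cases u') (simp add: W_mem_iff)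
    then show ?thesis using plus_cancel_iff[OF S_adequate x] by (simp add: Wmul_Pair)
  qed
  have "(e, p x) \<in> W" using W_idem_plus[OF w] by (simp add: idem_def)
  then show ?thesis using w left_fix left_cancel by (simp add: Rstar_iff)
qed

lemma W_Rstar_idem_unique:
  assumes w: "(e, x) \<in> W" and g: "idem W mW (g, y)" and R: "Rstar W mW (e, x) (g, y)"
  shows "(g, y) = (e, p x)"
proof -
  have x: "x \<in> S" "Lrel I mI e (p x)" using w by (auto simp: W_mem_iff)
  have "(g, y) \<in> W" "mW (g, y) (g, y) = (g, y)" using g by (auto simp: idem_def)
  then have y: "y \<in> S" "Lrel I mI g (p y)" "idem S mS y"
    by (auto simp: W_mem_iff Wmul_Pair idem_def)
  have px: "idem S mS (p x)" using idem_plus[OF S_adequate x(1)] .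
  have R': "Rstar W mW (e, p x) (g, y)"
    using Rstar_trans[OF Rstar_sym[OF W_Rstar_plus[OF w]] R] .
  have "mW (g, y) (e, p x) = (e, p x)"
    using Rstar_idem_absorb[OF R' W_idem_plus[OF w] g] .
  moreover have "mW (e, p x) (g, y) = (g, y)"
    using Rstar_idem_absorb[OF Rstar_sym[OF R'] g W_idem_plus[OF w]] .
  ultimately have e: "mI g (act y e) = e" and "mS y (p x) = p x" "mS (p x) y = y"
    by (simp_all add: Wmul_Pair)
  then have "y = p x" using adequate_idem_commute[OF S_adequate y(3) px] by simp
  moreover have "mI g (act (p x) e) = g"
    using absorb_act_in_Lclass[OF px x(2)] y(2) plus_of_idem[OF S_adequate px] \<open>y = p x\<close>
    by simp
  ultimately show ?thesis using e by simp
qed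

lemma W_Rstar_unique_idem:
  "w \<in> W \<Longrightarrow> \<exists>!u. idem W mW u \<and> Rstar W mW w u"
  using W_idem_plus W_Rstar_plus W_Rstar_idem_unique by (metis prod.collapse)

lemma W_left_abundant: "left_abundant W mW"
  unfolding left_abundant_def using W_semigroup W_Rstar_unique_idem by blast

end

theorem lemma3p2:
  fixes S I E0 :: "'a set"
    and mS mI act :: "'a \<Rightarrow> 'a \<Rightarrow> 'a"
  assumes S_adeq: "adequate S mS"
    and E0_def: "E0 = {e. idem S mS e}"
    and I_lrb: "left_regular_band I mI"
    and transv: "semilattice_transversal E0 I mI"
    and E0_sub: "\<forall>e\<in>E0. \<forall>f\<in>E0. mI e f = mS e f"
    and act_closed: "\<forall>x\<in>S. \<forall>e\<in>I. act x e \<in> I"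
    and act_assoc: "\<forall>x\<in>S. \<forall>y\<in>S. \<forall>e\<in>I. act (mS x y) e = act x (act y e)"
    and act_hom: "\<forall>x\<in>S. \<forall>e\<in>I. \<forall>f\<in>I. act x (mI e f) = mI (act x e) (act x f)"
    and act_plus: "\<forall>x\<in>S. \<forall>y\<in>S. act x (plus S mS y) = plus S mS (mS x y)"
  shows "left_abundant (Wset S mS I mI) (Wmul mS mI act) \<and>
         (\<forall>w\<in>Wset S mS I mI. \<exists>!e. idem (Wset S mS I mI) (Wmul mS mI act) e \<and>
              Rstar (Wset S mS I mI) (Wmul mS mI act) w e)"
proof -
  interpret adequate_band_action S I mS mI act
  proof
    show "semigroup_on I mI" "\<forall>a\<in>I. mI a a = a"
      using I_lrb by (simp_all add: left_regular_band_def)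
    show "e \<in> I" if "idem S mS e" for e
      using that transv E0_def by (auto simp: semilattice_transversal_def)
  qed (use assms in auto)
  show ?thesis using W_left_abundant W_Rstar_unique_idem by blast
qed

end
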